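(* Let $n\ge 3$, $R>0$, let $P$ be a nonnegative $C^1$ function on $(0,R)$ such that the equation $y''+\frac1r y'+P(r)y=0$ has a positive solution on $(0,R)$, and let $0\le\lambda\le n-2$. Then the pair $$\Big(r^{-\lambda},\ \Big(\frac{n-\lambda-2}{2}\Big)^2r^{-\lambda-2}+r^{-\lambda}P(r)\Big)$$ is an $n$-dimensional Bessel pair on $(0,R)$.
   Context: A pair $(V,W)$ of positive functions on $(0,R)$ is called an $n$-dimensional Bessel pair on $(0,R)$ if the equation $y''(r)+\big(\frac{n-1}{r}+\frac{V_r(r)}{V(r)}\big)y'(r)+\frac{W(r)}{V(r)}y(r)=0$ has a positive solution on $(0,R)$, where $V_r$ denotes the derivative of $V$. *)

theory Defs
  imports "HOL-Analysis.Analysis"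
begin

definition has_pos_solution :: "real \<Rightarrow> (real \<Rightarrow> real) \<Rightarrow> (real \<Rightarrow> real) \<Rightarrow> bool" where
  "has_pos_solution R p q \<longleftrightarrow>
     (\<exists>y y' y''. \<forall>r\<in>{0<..<R}.
        y r > 0 \<and>
        (y has_real_derivative y' r) (at r) \<and>
        (y' has_real_derivative y'' r) (at r) \<and>
        y'' r + p r * y' r + q r * y r = 0)"

definition bessel_pair :: "nat \<Rightarrow> real \<Rightarrow> (real \<Rightarrow> real) \<Rightarrow> (real \<Rightarrow> real) \<Rightarrow> bool" where
  "bessel_pair n R V W \<longleftrightarrow>
     (\<forall>r\<in>{0<..<R}. V r > 0 \<and> W r \<ge> 0 \<and> V differentiable (at r)) \<and>
     has_pos_solution R (\<lambda>r. (real n - 1) / r + deriv V r / V r) (\<lambda>r. W r / V r)"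

end

theory Submission
  imports Defs
begin

text \<open>
  Write \<open>V r = r powr (-lam)\<close> and \<open>a = (n - lam - 2) / 2\<close>.  For this \<open>V\<close>
  the Bessel-pair equation has the Euler-type coefficients
  \<open>(n - 1)/r + V'/V = (2a + 1)/r\<close> and \<open>W/V = P r + a\<^sup>2/r\<^sup>2\<close>.
  The substitution \<open>z = r powr (-a) * y\<close> turns a solution of
  \<open>y'' + (c/r) y' + q y = 0\<close> into a solution of
  \<open>z'' + ((c + 2a)/r) z' + (q + a(a + c - 1)/r\<^sup>2) z = 0\<close> and preserves positivity.
  With \<open>c = 1\<close> this maps the given positive solution of \<open>y'' + y'/r + P y = 0\<close> to a
  positive solution of the Bessel-pair equation.

  Only \<open>P \<ge> 0\<close> (for \<open>W \<ge> 0\<close>) and the positive solution are used.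
\<close>

lemma euler_shift_at:
  fixes y y' y'' q :: "real \<Rightarrow> real" and a c r :: real
  assumes r: "r > 0"
    and dy: "(y has_real_derivative y' r) (at r)"
    and dy': "(y' has_real_derivative y'' r) (at r)"
  defines "z \<equiv> \<lambda>t. t powr (-a) * y t"
    and "z' \<equiv> \<lambda>t. t powr (-a) * y' t - a * (t powr (-a - 1) * y t)"
    and "z'' \<equiv> \<lambda>t. (-a) * t powr (-a - 1) * y' t + t powr (-a) * y'' t
                 - a * ((-a - 1) * t powr (-a - 2) * y t + t powr (-a - 1) * y' t)"
  shows "(z has_real_derivative z' r) (at r)"
    and "(z' has_real_derivative z'' r) (at r)"
    and "z'' r + (c + 2 * a) / r * z' r + (q r + a * (a + c - 1) / r\<^sup>2) * z r
         = r powr (-a) * (y'' r + c / r * y' r + q r * y r)"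
proof -
  have p1: "((\<lambda>t. t powr (-a)) has_real_derivative (-a) * r powr (-a - 1)) (at r)"
    using has_real_derivative_powr[OF r, of "-a"] by simp
  have p2: "((\<lambda>t. t powr (-a - 1)) has_real_derivative (-a - 1) * r powr (-a - 2)) (at r)"
    using has_real_derivative_powr[OF r, of "-a - 1"] by (simp add: algebra_simps)
  show "(z has_real_derivative z' r) (at r)"
    unfolding z_def z'_def using DERIV_mult[OF p1 dy] by (simp add: algebra_simps)
  show "(z' has_real_derivative z'' r) (at r)"
    unfolding z'_def z''_def
    using DERIV_diff[OF DERIV_mult[OF p1 dy'] DERIV_cmult[OF DERIV_mult[OF p2 dy], of a]]
    by (simp add: algebra_simps)
  have f1: "r powr (-a - 1) = r powr (-a) / r" and f2: "r powr (-a - 2) = r powr (-a) / r\<^sup>2"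
    using r by (simp_all add: powr_diff)
  show "z'' r + (c + 2 * a) / r * z' r + (q r + a * (a + c - 1) / r\<^sup>2) * z r
         = r powr (-a) * (y'' r + c / r * y' r + q r * y r)"
    unfolding z_def z'_def z''_def f1 f2 using r
    by (simp add: field_simps power2_eq_square)
qed

lemma has_pos_solution_euler_shift:
  fixes q :: "real \<Rightarrow> real" and a c R :: real
  assumes "has_pos_solution R (\<lambda>r. c / r) q"
  shows "has_pos_solution R (\<lambda>r. (c + 2 * a) / r) (\<lambda>r. q r + a * (a + c - 1) / r\<^sup>2)"
proof -
  obtain y y' y'' where y: "\<forall>r\<in>{0<..<R}. y r > 0 \<and>
        (y has_real_derivative y' r) (at r) \<and> (y' has_real_derivative y'' r) (at r) \<and>
        y'' r + c / r * y' r + q r * y r = 0"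
    using assms unfolding has_pos_solution_def by blast
  define z where "z t = t powr (-a) * y t" for t
  define z' where "z' t = t powr (-a) * y' t - a * (t powr (-a - 1) * y t)" for t
  define z'' where "z'' t = (-a) * t powr (-a - 1) * y' t + t powr (-a) * y'' t
                 - a * ((-a - 1) * t powr (-a - 2) * y t + t powr (-a - 1) * y' t)" for t
  have "z r > 0 \<and> (z has_real_derivative z' r) (at r) \<and> (z' has_real_derivative z'' r) (at r) \<and>
        z'' r + (c + 2 * a) / r * z' r + (q r + a * (a + c - 1) / r\<^sup>2) * z r = 0"
    if r: "r \<in> {0<..<R}" for r
  proof -
    from y r have yr: "y r > 0" "(y has_real_derivative y' r) (at r)"
      "(y' has_real_derivative y'' r) (at r)" "y'' r + c / r * y' r + q r * y r = 0" by auto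
    have "r > 0" using r by simp
    note shift = euler_shift_at[where r = r and y = y and y' = y' and y'' = y'' and a = a,
        OF this yr(2,3)]
    show ?thesis
      using shift yr(1,4) \<open>r > 0\<close> unfolding z_def[abs_def] z'_def[abs_def] z''_def[abs_def]
      by simp
  qed
  then show ?thesis unfolding has_pos_solution_def by blast
qed

lemma has_pos_solution_cong:
  assumes "\<forall>r\<in>{0<..<R}. p r = p' r \<and> q r = q' r"
    and "has_pos_solution R p q"
  shows "has_pos_solution R p' q'"
  using assms unfolding has_pos_solution_def by (metis (no_types, lifting))

lemma deriv_powr_over_powr:
  fixes r s :: real
  assumes "r > 0"
  shows "deriv (\<lambda>t. t powr s) r / r powr s = s / r"
proof -
  have "deriv (\<lambda>t. t powr s) r = s * r powr (s - 1)"
    using DERIV_imp_deriv[OF has_real_derivative_powr[OF assms]] .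
  then show ?thesis using assms by (simp add: powr_diff)
qed

text \<open>For the pair of the theorem the Bessel-pair equation is the Euler-shifted equation
  with \<open>c = 1\<close> and \<open>a = (n - lam - 2)/2\<close>.\<close>
lemma power_weight_coefficients:
  fixes n :: nat and lam r :: real and P :: "real \<Rightarrow> real"
  assumes r: "r > 0"
  defines "a \<equiv> (real n - lam - 2) / 2"
  shows "(real n - 1) / r + deriv (\<lambda>t. t powr (-lam)) r / r powr (-lam) = (1 + 2 * a) / r"
    and "(a\<^sup>2 * r powr (-lam - 2) + r powr (-lam) * P r) / r powr (-lam)
         = P r + a * (a + 1 - 1) / r\<^sup>2"
proof -
  show "(real n - 1) / r + deriv (\<lambda>t. t powr (-lam)) r / r powr (-lam) = (1 + 2 * a) / r"
    using deriv_powr_over_powr[OF r, of "-lam"] r unfolding a_def by (simp add: field_simps)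
  have "r powr (-lam - 2) = r powr (-lam) / r\<^sup>2"
    using r by (simp add: powr_diff)
  then show "(a\<^sup>2 * r powr (-lam - 2) + r powr (-lam) * P r) / r powr (-lam)
         = P r + a * (a + 1 - 1) / r\<^sup>2"
    using r by (simp add: field_simps power2_eq_square)
qed

theorem mainTheorem3:
  fixes n :: nat and R lam :: real and P :: "real \<Rightarrow> real"
  assumes "n \<ge> 3" and "R > 0"
    and "\<forall>r\<in>{0<..<R}. P r \<ge> 0"
    and "\<forall>r\<in>{0<..<R}. P differentiable (at r)"
    and "continuous_on {0<..<R} (deriv P)"
    and "has_pos_solution R (\<lambda>r. 1 / r) P"
    and "0 \<le> lam" and "lam \<le> real n - 2"
  shows "bessel_pair n R (\<lambda>r. r powr (-lam))
           (\<lambda>r. ((real n - lam - 2) / 2)^2 * r powr (-lam - 2) + r powr (-lam) * P r)"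
proof -
  define a where "a = (real n - lam - 2) / 2"
  have shifted: "has_pos_solution R (\<lambda>r. (1 + 2 * a) / r) (\<lambda>r. P r + a * (a + 1 - 1) / r\<^sup>2)"
    using has_pos_solution_euler_shift[OF assms(6)] .
  have weights: "r powr (-lam) > 0 \<and> a\<^sup>2 * r powr (-lam - 2) + r powr (-lam) * P r \<ge> 0 \<and>
        (\<lambda>t. t powr (-lam)) differentiable (at r)" if "r \<in> {0<..<R}" for r
    using that assms(3) has_real_derivative_powr[of r "-lam"] real_differentiable_def
    by (fastforce intro: add_nonneg_nonneg mult_nonneg_nonneg)
  have "has_pos_solution R (\<lambda>r. (real n - 1) / r + deriv (\<lambda>t. t powr (-lam)) r / r powr (-lam))
          (\<lambda>r. (a\<^sup>2 * r powr (-lam - 2) + r powr (-lam) * P r) / r powr (-lam))"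
    by (rule has_pos_solution_cong[OF _ shifted])
       (simp add: power_weight_coefficients a_def)
  with weights show ?thesis unfolding bessel_pair_def a_def by blast
qed

end
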